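(* Let $\varphi : X\to X$ be a morphism in $\mathscr{C}$ with kernel $\kappa : K\to X$ and cokernel $\lambda : X\to L$. Then $\varphi$ has a dual core inverse if and only if $\varphi$ is regular and both $\kappa\lambda : K\to L$ and $\lambda^{*}\lambda : L\to L$ are invertible. In this case, for every $\psi : X\to X$ with $\varphi\psi\varphi=\varphi$, $$\varphi_{\mathrm{core}}=[1_X-\lambda(\lambda^{*}\lambda)^{-1}\lambda^{*}]\,\psi\,[1_X-\lambda(\kappa\lambda)^{-1}\kappa].$$
   Context: $\mathscr{C}$ is an additive category with an involution $*$: a map on morphisms sending $\varphi : X\to Y$ to $\varphi^* : Y \to X$ such that $(\varphi^* )^*=\varphi$, $(\varphi\psi)^*=\psi^*\varphi^*$ and $(\varphi+\phi)^*=\varphi^*+\phi^*$. Composition is written left to right: for $\varphi : X\to Y$ and $\psi : Y\to Z$, $\varphi\psi : X \to Z$ means "first $\varphi$, then $\psi$". A kernel of $\varphi : X\to Y$ is a morphism $\kappa : K\to X$ with $\kappa\varphi=0$ such that every $\alpha : M\to X$ with $\alpha\varphi=0$ factors uniquely as $\alpha=\alpha'\kappa$. A cokernel of $\varphi$ is a morphism $\lambda : Y\to L$ with $\varphi\lambda=0$ such that every $\beta : Y\to M$ with $\varphi\beta=0$ factors uniquely as $\beta=\lambda\beta'$. $\varphi$ is regular if there is $\chi$ with $\varphi\chi\varphi=\varphi$. A morphism is invertible if it has a two-sided inverse. For $\varphi : X\to X$, a dual core inverse of $\varphi$ is a morphism $\chi : X\to X$ with $(\chi\varphi)^*=\chi\varphi$,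 $\chi^2\varphi=\chi$ and $\varphi^2\chi=\varphi$. It is unique when it exists and is denoted $\varphi_{\mathrm{core}}$. *)

theory Defs
  imports Main
begin

text \<open>Composition cmp f g is written diagrammatically: first f, then g.\<close>

record ('o, 'm) icat =
  Ob   :: "'o set"
  Hom  :: "'o \<Rightarrow> 'o \<Rightarrow> 'm set"
  cmp  :: "'m \<Rightarrow> 'm \<Rightarrow> 'm"
  idm  :: "'o \<Rightarrow> 'm"
  pls  :: "'m \<Rightarrow> 'm \<Rightarrow> 'm"
  zr   :: "'o \<Rightarrow> 'o \<Rightarrow> 'm"
  ngt  :: "'m \<Rightarrow> 'm"
  star :: "'m \<Rightarrow> 'm"

definition is_category :: "('o, 'm) icat \<Rightarrow> bool" where
  "is_category C \<longleftrightarrow>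
     (\<forall>X\<in>Ob C. idm C X \<in> Hom C X X) \<and>
     (\<forall>X\<in>Ob C. \<forall>Y\<in>Ob C. \<forall>Z\<in>Ob C. \<forall>f\<in>Hom C X Y. \<forall>g\<in>Hom C Y Z.
        cmp C f g \<in> Hom C X Z) \<and>
     (\<forall>W\<in>Ob C. \<forall>X\<in>Ob C. \<forall>Y\<in>Ob C. \<forall>Z\<in>Ob C.
        \<forall>f\<in>Hom C W X. \<forall>g\<in>Hom C X Y. \<forall>h\<in>Hom C Y Z.
        cmp C (cmp C f g) h = cmp C f (cmp C g h)) \<and>
     (\<forall>X\<in>Ob C. \<forall>Y\<in>Ob C. \<forall>f\<in>Hom C X Y.
        cmp C (idm C X) f = f \<and> cmp C f (idm C Y) = f)"

definition is_preadditive :: "('o, 'm) icat \<Rightarrow> bool" where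
  "is_preadditive C \<longleftrightarrow> is_category C \<and>
     (\<forall>X\<in>Ob C. \<forall>Y\<in>Ob C.
        zr C X Y \<in> Hom C X Y \<and>
        (\<forall>f\<in>Hom C X Y. \<forall>g\<in>Hom C X Y. pls C f g \<in> Hom C X Y) \<and>
        (\<forall>f\<in>Hom C X Y. ngt C f \<in> Hom C X Y) \<and>
        (\<forall>f\<in>Hom C X Y. \<forall>g\<in>Hom C X Y. \<forall>h\<in>Hom C X Y.
           pls C (pls C f g) h = pls C f (pls C g h)) \<and>
        (\<forall>f\<in>Hom C X Y. \<forall>g\<in>Hom C X Y. pls C f g = pls C g f) \<and>
        (\<forall>f\<in>Hom C X Y. pls C f (zr C X Y) = f) \<and>
        (\<forall>f\<in>Hom C X Y. pls C f (ngt C f) = zr C X Y)) \<and>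
     (\<forall>X\<in>Ob C. \<forall>Y\<in>Ob C. \<forall>Z\<in>Ob C.
        (\<forall>f\<in>Hom C X Y. \<forall>g\<in>Hom C Y Z. \<forall>h\<in>Hom C Y Z.
           cmp C f (pls C g h) = pls C (cmp C f g) (cmp C f h)) \<and>
        (\<forall>f\<in>Hom C X Y. \<forall>g\<in>Hom C X Y. \<forall>h\<in>Hom C Y Z.
           cmp C (pls C f g) h = pls C (cmp C f h) (cmp C g h)))"

definition is_additive :: "('o, 'm) icat \<Rightarrow> bool" where
  "is_additive C \<longleftrightarrow> is_preadditive C \<and>
     (\<exists>Z\<in>Ob C. \<forall>X\<in>Ob C. Hom C Z X = {zr C Z X} \<and> Hom C X Z = {zr C X Z}) \<and>
     (\<forall>X\<in>Ob C. \<forall>Y\<in>Ob C. \<exists>P\<in>Ob C.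
        \<exists>i1\<in>Hom C X P. \<exists>i2\<in>Hom C Y P. \<exists>p1\<in>Hom C P X. \<exists>p2\<in>Hom C P Y.
          cmp C i1 p1 = idm C X \<and> cmp C i2 p2 = idm C Y \<and>
          cmp C i1 p2 = zr C X Y \<and> cmp C i2 p1 = zr C Y X \<and>
          pls C (cmp C p1 i1) (cmp C p2 i2) = idm C P)"

definition is_involution :: "('o, 'm) icat \<Rightarrow> bool" where
  "is_involution C \<longleftrightarrow>
     (\<forall>X\<in>Ob C. \<forall>Y\<in>Ob C. \<forall>f\<in>Hom C X Y.
        star C f \<in> Hom C Y X \<and> star C (star C f) = f) \<and>
     (\<forall>X\<in>Ob C. \<forall>Y\<in>Ob C. \<forall>Z\<in>Ob C. \<forall>f\<in>Hom C X Y. \<forall>g\<in>Hom C Y Z.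
        star C (cmp C f g) = cmp C (star C g) (star C f)) \<and>
     (\<forall>X\<in>Ob C. \<forall>Y\<in>Ob C. \<forall>f\<in>Hom C X Y. \<forall>g\<in>Hom C X Y.
        star C (pls C f g) = pls C (star C f) (star C g))"

definition additive_inv_cat :: "('o, 'm) icat \<Rightarrow> bool" where
  "additive_inv_cat C \<longleftrightarrow> is_additive C \<and> is_involution C"

definition is_kernel :: "('o, 'm) icat \<Rightarrow> 'o \<Rightarrow> 'o \<Rightarrow> 'm \<Rightarrow> 'o \<Rightarrow> 'm \<Rightarrow> bool" where
  "is_kernel C X Y phi K kappa \<longleftrightarrow> K \<in> Ob C \<and> kappa \<in> Hom C K X \<and>
     cmp C kappa phi = zr C K Y \<and>
     (\<forall>M\<in>Ob C. \<forall>a\<in>Hom C M X. cmp C a phi = zr C M Y \<longrightarrow>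
        (\<exists>!a'. a' \<in> Hom C M K \<and> a = cmp C a' kappa))"

definition is_cokernel :: "('o, 'm) icat \<Rightarrow> 'o \<Rightarrow> 'o \<Rightarrow> 'm \<Rightarrow> 'o \<Rightarrow> 'm \<Rightarrow> bool" where
  "is_cokernel C X Y phi L lam \<longleftrightarrow> L \<in> Ob C \<and> lam \<in> Hom C Y L \<and>
     cmp C phi lam = zr C X L \<and>
     (\<forall>M\<in>Ob C. \<forall>b\<in>Hom C Y M. cmp C phi b = zr C X M \<longrightarrow>
        (\<exists>!b'. b' \<in> Hom C L M \<and> b = cmp C lam b'))"

definition regular :: "('o, 'm) icat \<Rightarrow> 'o \<Rightarrow> 'o \<Rightarrow> 'm \<Rightarrow> bool" where
  "regular C X Y phi \<longleftrightarrow> (\<exists>chi\<in>Hom C Y X. cmp C (cmp C phi chi) phi = phi)"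

definition is_inverse :: "('o, 'm) icat \<Rightarrow> 'o \<Rightarrow> 'o \<Rightarrow> 'm \<Rightarrow> 'm \<Rightarrow> bool" where
  "is_inverse C X Y f g \<longleftrightarrow> g \<in> Hom C Y X \<and> cmp C f g = idm C X \<and> cmp C g f = idm C Y"

definition invertible :: "('o, 'm) icat \<Rightarrow> 'o \<Rightarrow> 'o \<Rightarrow> 'm \<Rightarrow> bool" where
  "invertible C X Y f \<longleftrightarrow> (\<exists>g. is_inverse C X Y f g)"

definition minv :: "('o, 'm) icat \<Rightarrow> 'o \<Rightarrow> 'o \<Rightarrow> 'm \<Rightarrow> 'm" where
  "minv C X Y f = (THE g. is_inverse C X Y f g)"

definition is_dcore_inv :: "('o, 'm) icat \<Rightarrow> 'o \<Rightarrow> 'm \<Rightarrow> 'm \<Rightarrow> bool" where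
  "is_dcore_inv C X phi chi \<longleftrightarrow> chi \<in> Hom C X X \<and>
     star C (cmp C chi phi) = cmp C chi phi \<and>
     cmp C (cmp C chi chi) phi = chi \<and>
     cmp C (cmp C phi phi) chi = phi"

definition has_dcore_inv :: "('o, 'm) icat \<Rightarrow> 'o \<Rightarrow> 'm \<Rightarrow> bool" where
  "has_dcore_inv C X phi \<longleftrightarrow> (\<exists>chi. is_dcore_inv C X phi chi)"

definition dcore :: "('o, 'm) icat \<Rightarrow> 'o \<Rightarrow> 'm \<Rightarrow> 'm" where
  "dcore C X phi = (THE chi. is_dcore_inv C X phi chi)"

definition mns :: "('o, 'm) icat \<Rightarrow> 'm \<Rightarrow> 'm \<Rightarrow> 'm" where
  "mns C f g = pls C f (ngt C g)"

end

theory Submission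
  imports Defs
begin

(* If chi is the dual core inverse of phi, then E = 1 - phi chi is annihilated by phi on both
   sides and fixes kappa and lam, so it factors both as sigma kappa and as lam tau, and tau sigma
   inverts kappa lam; the self-adjoint Q = 1 - chi phi factors as lam rho with rho lam = 1, so
   rho rho^* inverts lam^* lam.
   Conversely, P = 1 - lam (lam^* lam)^-1 lam^* is self-adjoint with P lam = 0, and
   Q = 1 - lam (kappa lam)^-1 kappa satisfies kappa Q = 0 = Q lam. For an inner inverse psi of phi,
   1 - psi phi factors through the cokernel and 1 - phi psi through the kernel, whence
   P psi phi = P and phi psi Q = Q; these identities make P psi Q a dual core inverse, and
   uniqueness of dual core inverses gives the formula. *)

section \<open>Additive categories with involution\<close>

locale additive_inv_category =
  fixes C :: "('o, 'm) icat"
  assumes additive_inv_cat: "additive_inv_cat C"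
begin

abbreviation mcomp (infixl "\<cdot>" 70) where "f \<cdot> g \<equiv> cmp C f g"

lemma preadditive: "is_preadditive C"
  using additive_inv_cat unfolding additive_inv_cat_def is_additive_def by blast

lemma category: "is_category C"
  using preadditive unfolding is_preadditive_def by blast

lemma involution: "is_involution C"
  using additive_inv_cat unfolding additive_inv_cat_def by blast

lemma id_closed: "X \<in> Ob C \<Longrightarrow> idm C X \<in> Hom C X X"
  using category unfolding is_category_def by blast

lemma comp_closed:
  "\<lbrakk>X \<in> Ob C; Y \<in> Ob C; Z \<in> Ob C; f \<in> Hom C X Y; g \<in> Hom C Y Z\<rbrakk> \<Longrightarrow> f \<cdot> g \<in> Hom C X Z"
  using category unfolding is_category_def by blast

lemma comp_assoc:
  "\<lbrakk>W \<in> Ob C; X \<in> Ob C; Y \<in> Ob C; Z \<in> Ob C; f \<in> Hom C W X; g \<in> Hom C X Y; h \<in> Hom C Y Z\<rbrakk>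
    \<Longrightarrow> f \<cdot> g \<cdot> h = f \<cdot> (g \<cdot> h)"
  using category unfolding is_category_def by blast

lemma comp_id_left: "\<lbrakk>X \<in> Ob C; Y \<in> Ob C; f \<in> Hom C X Y\<rbrakk> \<Longrightarrow> idm C X \<cdot> f = f"
  using category unfolding is_category_def by blast

lemma comp_id_right: "\<lbrakk>X \<in> Ob C; Y \<in> Ob C; f \<in> Hom C X Y\<rbrakk> \<Longrightarrow> f \<cdot> idm C Y = f"
  using category unfolding is_category_def by blast

lemma zero_closed: "\<lbrakk>X \<in> Ob C; Y \<in> Ob C\<rbrakk> \<Longrightarrow> zr C X Y \<in> Hom C X Y"
  using preadditive unfolding is_preadditive_def by blast

lemma plus_closed:
  "\<lbrakk>X \<in> Ob C; Y \<in> Ob C; f \<in> Hom C X Y; g \<in> Hom C X Y\<rbrakk> \<Longrightarrow> pls C f g \<in> Hom C X Y"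
  using preadditive unfolding is_preadditive_def by blast

lemma neg_closed: "\<lbrakk>X \<in> Ob C; Y \<in> Ob C; f \<in> Hom C X Y\<rbrakk> \<Longrightarrow> ngt C f \<in> Hom C X Y"
  using preadditive unfolding is_preadditive_def by blast

lemma plus_assoc:
  "\<lbrakk>X \<in> Ob C; Y \<in> Ob C; f \<in> Hom C X Y; g \<in> Hom C X Y; h \<in> Hom C X Y\<rbrakk>
    \<Longrightarrow> pls C (pls C f g) h = pls C f (pls C g h)"
  using preadditive unfolding is_preadditive_def by blast

lemma plus_commute:
  "\<lbrakk>X \<in> Ob C; Y \<in> Ob C; f \<in> Hom C X Y; g \<in> Hom C X Y\<rbrakk> \<Longrightarrow> pls C f g = pls C g f"
  using preadditive unfolding is_preadditive_def by blast

lemma plus_zero: "\<lbrakk>X \<in> Ob C; Y \<in> Ob C; f \<in> Hom C X Y\<rbrakk> \<Longrightarrow> pls C f (zr C X Y) = f"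
  using preadditive unfolding is_preadditive_def by blast

lemma plus_neg: "\<lbrakk>X \<in> Ob C; Y \<in> Ob C; f \<in> Hom C X Y\<rbrakk> \<Longrightarrow> pls C f (ngt C f) = zr C X Y"
  using preadditive unfolding is_preadditive_def by blast

lemma comp_distrib_left:
  "\<lbrakk>X \<in> Ob C; Y \<in> Ob C; Z \<in> Ob C; f \<in> Hom C X Y; g \<in> Hom C Y Z; h \<in> Hom C Y Z\<rbrakk>
    \<Longrightarrow> f \<cdot> pls C g h = pls C (f \<cdot> g) (f \<cdot> h)"
  using preadditive unfolding is_preadditive_def by blast

lemma comp_distrib_right:
  assumes "X \<in> Ob C" "Y \<in> Ob C" "Z \<in> Ob C" "f \<in> Hom C X Y" "g \<in> Hom C X Y" "h \<in> Hom C Y Z"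
  shows "pls C f g \<cdot> h = pls C (f \<cdot> h) (g \<cdot> h)"
proof -
  have "\<forall>X\<in>Ob C. \<forall>Y\<in>Ob C. \<forall>Z\<in>Ob C. \<forall>f\<in>Hom C X Y. \<forall>g\<in>Hom C X Y. \<forall>h\<in>Hom C Y Z.
      pls C f g \<cdot> h = pls C (f \<cdot> h) (g \<cdot> h)"
    using preadditive unfolding is_preadditive_def by meson
  with assms show ?thesis by blast
qed

lemma star_closed: "\<lbrakk>X \<in> Ob C; Y \<in> Ob C; f \<in> Hom C X Y\<rbrakk> \<Longrightarrow> star C f \<in> Hom C Y X"
  using involution unfolding is_involution_def by blast

lemma star_star: "\<lbrakk>X \<in> Ob C; Y \<in> Ob C; f \<in> Hom C X Y\<rbrakk> \<Longrightarrow> star C (star C f) = f"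
  using involution unfolding is_involution_def by blast

lemma star_comp:
  "\<lbrakk>X \<in> Ob C; Y \<in> Ob C; Z \<in> Ob C; f \<in> Hom C X Y; g \<in> Hom C Y Z\<rbrakk>
    \<Longrightarrow> star C (f \<cdot> g) = star C g \<cdot> star C f"
  using involution unfolding is_involution_def by blast

lemma star_plus:
  "\<lbrakk>X \<in> Ob C; Y \<in> Ob C; f \<in> Hom C X Y; g \<in> Hom C X Y\<rbrakk>
    \<Longrightarrow> star C (pls C f g) = pls C (star C f) (star C g)"
  using involution unfolding is_involution_def by blast

lemma zero_plus: "\<lbrakk>X \<in> Ob C; Y \<in> Ob C; f \<in> Hom C X Y\<rbrakk> \<Longrightarrow> pls C (zr C X Y) f = f"
  by (simp add: plus_commute[of X Y "zr C X Y" f] zero_closed plus_zero)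

lemma plus_right_cancel:
  assumes "X \<in> Ob C" "Y \<in> Ob C" "f \<in> Hom C X Y" "g \<in> Hom C X Y" "h \<in> Hom C X Y"
    and "pls C f h = pls C g h"
  shows "f = g"
proof -
  note laws = plus_assoc[of X Y] neg_closed[of X Y] plus_neg[of X Y] plus_zero[of X Y]
  have "f = pls C (pls C f h) (ngt C h)" using assms(1-5) by (simp add: laws)
  also have "\<dots> = pls C (pls C g h) (ngt C h)" using assms(6) by simp
  also have "\<dots> = g" using assms(1-5) by (simp add: laws)
  finally show ?thesis .
qed

lemma neg_unique:
  assumes "X \<in> Ob C" "Y \<in> Ob C" "f \<in> Hom C X Y" "g \<in> Hom C X Y" "pls C f g = zr C X Y"
  shows "g = ngt C f"
proof (rule plus_right_cancel[OF assms(1,2,4) _ assms(3)])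
  show "ngt C f \<in> Hom C X Y" using assms by (simp add: neg_closed)
  show "pls C g f = pls C (ngt C f) f"
    using assms by (simp add: plus_commute[of X Y _ f] neg_closed plus_neg)
qed

lemma neg_zero: "\<lbrakk>X \<in> Ob C; Y \<in> Ob C\<rbrakk> \<Longrightarrow> ngt C (zr C X Y) = zr C X Y"
  using neg_unique[of X Y "zr C X Y" "zr C X Y"] by (simp add: plus_zero zero_closed)

lemma diff_closed: "\<lbrakk>X \<in> Ob C; Y \<in> Ob C; f \<in> Hom C X Y; g \<in> Hom C X Y\<rbrakk> \<Longrightarrow> mns C f g \<in> Hom C X Y"
  unfolding mns_def by (simp add: neg_closed plus_closed)

lemma diff_self: "\<lbrakk>X \<in> Ob C; Y \<in> Ob C; f \<in> Hom C X Y\<rbrakk> \<Longrightarrow> mns C f f = zr C X Y"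
  unfolding mns_def by (simp add: plus_neg)

lemma diff_zero: "\<lbrakk>X \<in> Ob C; Y \<in> Ob C; f \<in> Hom C X Y\<rbrakk> \<Longrightarrow> mns C f (zr C X Y) = f"
  unfolding mns_def by (simp add: neg_zero plus_zero)

lemma diff_eq_swap:
  assumes "X \<in> Ob C" "Y \<in> Ob C" "f \<in> Hom C X Y" "g \<in> Hom C X Y" "mns C f g = h"
  shows "g = mns C f h"
proof -
  note laws = plus_assoc[of X Y] neg_closed[of X Y] plus_neg[of X Y] plus_zero[of X Y]
  have h: "h \<in> Hom C X Y" using assms diff_closed by blast
  have "f = pls C h g"
    using assms by (simp add: mns_def laws plus_commute[of X Y "ngt C g" g] flip: assms(5))
  then have "mns C f h = pls C (pls C g h) (ngt C h)"
    using assms h by (simp add: mns_def plus_commute[of X Y h g])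
  also have "\<dots> = g" using assms(1-4) h by (simp add: laws)
  finally show ?thesis by simp
qed

lemma diff_eq_zero_imp_eq:
  "\<lbrakk>X \<in> Ob C; Y \<in> Ob C; f \<in> Hom C X Y; g \<in> Hom C X Y; mns C f g = zr C X Y\<rbrakk> \<Longrightarrow> g = f"
  using diff_eq_swap diff_zero by metis

lemma comp_zero_right:
  assumes "X \<in> Ob C" "Y \<in> Ob C" "Z \<in> Ob C" "f \<in> Hom C X Y"
  shows "f \<cdot> zr C Y Z = zr C X Z"
proof (rule plus_right_cancel[OF assms(1,3)])
  show "pls C (f \<cdot> zr C Y Z) (f \<cdot> zr C Y Z) = pls C (zr C X Z) (f \<cdot> zr C Y Z)"
    using assms by (simp add: comp_distrib_left[symmetric] zero_closed plus_zero comp_closed zero_plus)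
qed (use assms in \<open>simp_all add: comp_closed zero_closed\<close>)

lemma comp_zero_left:
  assumes "X \<in> Ob C" "Y \<in> Ob C" "Z \<in> Ob C" "f \<in> Hom C Y Z"
  shows "zr C X Y \<cdot> f = zr C X Z"
proof (rule plus_right_cancel[OF assms(1,3)])
  show "pls C (zr C X Y \<cdot> f) (zr C X Y \<cdot> f) = pls C (zr C X Z) (zr C X Y \<cdot> f)"
    using assms by (simp add: comp_distrib_right[symmetric] zero_closed plus_zero comp_closed zero_plus)
qed (use assms in \<open>simp_all add: comp_closed zero_closed\<close>)

lemma comp_neg_right:
  assumes "X \<in> Ob C" "Y \<in> Ob C" "Z \<in> Ob C" "f \<in> Hom C X Y" "g \<in> Hom C Y Z"
  shows "f \<cdot> ngt C g = ngt C (f \<cdot> g)"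
proof (rule neg_unique[OF assms(1,3)])
  show "pls C (f \<cdot> g) (f \<cdot> ngt C g) = zr C X Z"
    using assms by (simp add: comp_distrib_left[symmetric] neg_closed plus_neg comp_zero_right)
qed (use assms in \<open>simp_all add: comp_closed neg_closed\<close>)

lemma comp_neg_left:
  assumes "X \<in> Ob C" "Y \<in> Ob C" "Z \<in> Ob C" "f \<in> Hom C X Y" "g \<in> Hom C Y Z"
  shows "ngt C f \<cdot> g = ngt C (f \<cdot> g)"
proof (rule neg_unique[OF assms(1,3)])
  show "pls C (f \<cdot> g) (ngt C f \<cdot> g) = zr C X Z"
    using assms by (simp add: comp_distrib_right[symmetric] neg_closed plus_neg comp_zero_left)
qed (use assms in \<open>simp_all add: comp_closed neg_closed\<close>)

lemma comp_diff_distrib_left: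
  "\<lbrakk>X \<in> Ob C; Y \<in> Ob C; Z \<in> Ob C; f \<in> Hom C X Y; g \<in> Hom C Y Z; h \<in> Hom C Y Z\<rbrakk>
    \<Longrightarrow> f \<cdot> mns C g h = mns C (f \<cdot> g) (f \<cdot> h)"
  unfolding mns_def by (simp add: comp_distrib_left neg_closed comp_neg_right)

lemma comp_diff_distrib_right:
  "\<lbrakk>X \<in> Ob C; Y \<in> Ob C; Z \<in> Ob C; f \<in> Hom C X Y; g \<in> Hom C X Y; h \<in> Hom C Y Z\<rbrakk>
    \<Longrightarrow> mns C f g \<cdot> h = mns C (f \<cdot> h) (g \<cdot> h)"
  unfolding mns_def by (simp add: comp_distrib_right neg_closed comp_neg_left)

lemma star_zero:
  assumes "X \<in> Ob C" "Y \<in> Ob C"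
  shows "star C (zr C X Y) = zr C Y X"
proof (rule plus_right_cancel[OF assms(2,1)])
  show "pls C (star C (zr C X Y)) (star C (zr C X Y)) = pls C (zr C Y X) (star C (zr C X Y))"
    using assms by (simp add: star_plus[symmetric] zero_closed plus_zero star_closed zero_plus)
qed (use assms in \<open>simp_all add: star_closed zero_closed\<close>)

lemma star_neg:
  assumes "X \<in> Ob C" "Y \<in> Ob C" "f \<in> Hom C X Y"
  shows "star C (ngt C f) = ngt C (star C f)"
proof (rule neg_unique[OF assms(2,1)])
  show "pls C (star C f) (star C (ngt C f)) = zr C Y X"
    using assms by (simp add: star_plus[symmetric] neg_closed plus_neg star_zero)
qed (use assms in \<open>simp_all add: star_closed neg_closed\<close>)

lemma star_diff:
  "\<lbrakk>X \<in> Ob C; Y \<in> Ob C; f \<in> Hom C X Y; g \<in> Hom C X Y\<rbrakk>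
    \<Longrightarrow> star C (mns C f g) = mns C (star C f) (star C g)"
  unfolding mns_def by (simp add: star_plus neg_closed star_neg)

lemma star_id:
  assumes "X \<in> Ob C"
  shows "star C (idm C X) = idm C X"
proof -
  note closed = id_closed[OF assms] star_closed[OF assms assms id_closed[OF assms]]
  have "star C (idm C X) = star C (idm C X) \<cdot> star C (star C (idm C X))"
    using assms closed by (simp add: comp_id_right star_star)
  also have "\<dots> = star C (star C (idm C X) \<cdot> idm C X)"
    using assms closed by (simp add: star_comp)
  also have "\<dots> = idm C X"
    using assms closed by (simp add: comp_id_right star_star)
  finally show ?thesis .
qed

lemma inverse_unique:
  assumes "A \<in> Ob C" "B \<in> Ob C" "f \<in> Hom C A B"
    and "is_inverse C A B f g" "is_inverse C A B f h"
  shows "g = h"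
proof -
  have g: "g \<in> Hom C B A" "f \<cdot> g = idm C A" "g \<cdot> f = idm C B"
    and h: "h \<in> Hom C B A" "f \<cdot> h = idm C A" "h \<cdot> f = idm C B"
    using assms(4,5) unfolding is_inverse_def by auto
  have "g = g \<cdot> (f \<cdot> h)" using assms g h by (simp add: comp_id_right)
  also have "\<dots> = g \<cdot> f \<cdot> h" using comp_assoc[OF assms(2,1,2,1) g(1) assms(3) h(1)] by simp
  also have "\<dots> = h" using assms g h by (simp add: comp_id_left)
  finally show ?thesis .
qed

lemma minv_eqI:
  "\<lbrakk>A \<in> Ob C; B \<in> Ob C; f \<in> Hom C A B; is_inverse C A B f g\<rbrakk> \<Longrightarrow> minv C A B f = g"
  unfolding minv_def using inverse_unique by blast

lemma inverse_self_adjoint: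
  assumes A: "A \<in> Ob C" and f: "f \<in> Hom C A A" "star C f = f" and g: "is_inverse C A A f g"
  shows "star C g = g"
proof (rule inverse_unique[OF A A f(1) _ g])
  have gH: "g \<in> Hom C A A" and "f \<cdot> g = idm C A" "g \<cdot> f = idm C A"
    using g unfolding is_inverse_def by auto
  then have "star C (g \<cdot> f) = idm C A" "star C (f \<cdot> g) = idm C A"
    using A by (simp_all add: star_id)
  then show "is_inverse C A A f (star C g)"
    using A f gH by (simp add: is_inverse_def star_comp star_closed)
qed

section \<open>Dual core inverses\<close>

context
  fixes X phi
  assumes X: "X \<in> Ob C" and phi: "phi \<in> Hom C X X"
begin

lemma is_dcore_invD:
  assumes "is_dcore_inv C X phi chi"
  shows "chi \<in> Hom C X X" "star C (chi \<cdot> phi) = chi \<cdot> phi"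
    "chi \<cdot> (chi \<cdot> phi) = chi" "phi \<cdot> (phi \<cdot> chi) = phi"
  using assms comp_assoc[OF X X X X] phi unfolding is_dcore_inv_def by auto

lemma dcore_inv_inner:
  assumes "is_dcore_inv C X phi chi"
  shows "phi \<cdot> (chi \<cdot> phi) = phi"
proof -
  note chi = is_dcore_invD[OF assms] and laws = comp_assoc[OF X X X X] comp_closed[OF X X X]
  have "phi \<cdot> (chi \<cdot> phi) = phi \<cdot> (phi \<cdot> chi) \<cdot> (chi \<cdot> phi)" by (simp add: chi)
  also have "\<dots> = phi \<cdot> (phi \<cdot> (chi \<cdot> (chi \<cdot> phi)))" using phi chi(1) by (simp add: laws)
  also have "\<dots> = phi" by (simp add: chi)
  finally show ?thesis .
qed

lemma dcore_inv_outer: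
  assumes "is_dcore_inv C X phi chi"
  shows "chi \<cdot> (phi \<cdot> chi) = chi"
proof -
  note chi = is_dcore_invD[OF assms] and laws = comp_assoc[OF X X X X] comp_closed[OF X X X]
  have "chi \<cdot> (phi \<cdot> chi) = chi \<cdot> (chi \<cdot> phi) \<cdot> (phi \<cdot> chi)" by (simp add: chi)
  also have "\<dots> = chi \<cdot> (chi \<cdot> (phi \<cdot> (phi \<cdot> chi)))" using phi chi(1) by (simp add: laws)
  also have "\<dots> = chi" by (simp add: chi)
  finally show ?thesis .
qed

lemma dcore_inv_imp_regular: "is_dcore_inv C X phi chi \<Longrightarrow> regular C X X phi"
  unfolding regular_def using phi is_dcore_invD(1) dcore_inv_inner
  by (intro bexI[of _ chi]) (simp_all add: comp_assoc[OF X X X X])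

lemma dcore_inv_unique:
  assumes x: "is_dcore_inv C X phi x" and y: "is_dcore_inv C X phi y"
  shows "x = y"
proof -
  note laws = comp_assoc[OF X X X X] comp_closed[OF X X X]
  note x' = is_dcore_invD[OF x] dcore_inv_inner[OF x] dcore_inv_outer[OF x]
  note y' = is_dcore_invD[OF y] dcore_inv_inner[OF y] dcore_inv_outer[OF y]
  (* x phi and y phi are self-adjoint and absorb each other. *)
  have right: "x \<cdot> phi = y \<cdot> phi"
  proof -
    have "x \<cdot> phi = star C (x \<cdot> phi \<cdot> (y \<cdot> phi))"
      using phi x'(1) y'(1) by (simp add: laws x'(2) y'(5))
    also have "\<dots> = star C (y \<cdot> phi) \<cdot> star C (x \<cdot> phi)"
      by (intro star_comp[OF X X X] laws(2) phi x'(1) y'(1))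
    also have "\<dots> = y \<cdot> (phi \<cdot> (x \<cdot> phi))"
      using phi x'(1) y'(1) by (simp add: laws x'(2) y'(2))
    also have "\<dots> = y \<cdot> phi" by (simp add: x'(5))
    finally show ?thesis .
  qed
  have expand: "phi \<cdot> x = phi \<cdot> (phi \<cdot> (x \<cdot> (x \<cdot> (x \<cdot> phi))))"
  proof -
    have "phi \<cdot> x = phi \<cdot> (phi \<cdot> x) \<cdot> x" by (simp add: x'(4))
    also have "\<dots> = phi \<cdot> (phi \<cdot> (x \<cdot> x))" using phi x'(1) by (simp add: laws)
    also have "\<dots> = phi \<cdot> (phi \<cdot> (x \<cdot> (x \<cdot> (x \<cdot> phi))))" by (simp add: x'(3))
    finally show ?thesis .
  qed
  have left: "phi \<cdot> x = phi \<cdot> y"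
  proof -
    have "phi \<cdot> y = phi \<cdot> (x \<cdot> phi) \<cdot> y" by (simp add: x'(5))
    also have "\<dots> = phi \<cdot> x \<cdot> (phi \<cdot> y)" using phi x'(1) y'(1) by (simp add: laws)
    also have "\<dots> = phi \<cdot> (phi \<cdot> (x \<cdot> (x \<cdot> (x \<cdot> (phi \<cdot> (phi \<cdot> y))))))"
      using phi x'(1) y'(1) by (simp add: laws expand)
    also have "\<dots> = phi \<cdot> x" by (simp add: y'(4) flip: expand)
    finally show ?thesis by simp
  qed
  have "x = x \<cdot> phi \<cdot> x" using phi x'(1) by (simp add: laws x'(6))
  also have "\<dots> = y \<cdot> (phi \<cdot> y)" using phi x'(1) y'(1) by (simp add: right left laws)
  also have "\<dots> = y" by (rule y'(6))
  finally show ?thesis .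
qed

lemma dcore_eqI: "is_dcore_inv C X phi chi \<Longrightarrow> dcore C X phi = chi"
  unfolding dcore_def using dcore_inv_unique by blast

lemma dcore_inv_of_projections:
  assumes psi: "psi \<in> Hom C X X" and P: "P \<in> Hom C X X" and Q: "Q \<in> Hom C X X"
    and P_adj: "star C P = P" and QP: "Q \<cdot> P = Q"
    and phi_P: "phi \<cdot> P = phi" and phi_Q: "phi \<cdot> Q = phi" and Q_phi: "Q \<cdot> phi = phi"
    and P_absorbs: "P \<cdot> (psi \<cdot> phi) = P" and Q_absorbs: "phi \<cdot> (psi \<cdot> Q) = Q"
  shows "is_dcore_inv C X phi (P \<cdot> psi \<cdot> Q)"
proof -
  note laws = comp_assoc[OF X X X X] comp_closed[OF X X X]
  have chi_phi: "P \<cdot> psi \<cdot> Q \<cdot> phi = P"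
    using phi psi P Q by (simp add: laws Q_phi P_absorbs)
  have "P \<cdot> psi \<cdot> Q \<cdot> (P \<cdot> psi \<cdot> Q) \<cdot> phi = P \<cdot> psi \<cdot> Q \<cdot> (P \<cdot> psi \<cdot> Q \<cdot> phi)"
    using phi psi P Q by (simp add: laws)
  also have "\<dots> = P \<cdot> psi \<cdot> Q \<cdot> P" by (simp only: chi_phi)
  also have "\<dots> = P \<cdot> psi \<cdot> Q" using psi P Q by (simp add: laws QP)
  finally have "P \<cdot> psi \<cdot> Q \<cdot> (P \<cdot> psi \<cdot> Q) \<cdot> phi = P \<cdot> psi \<cdot> Q" .
  moreover have "phi \<cdot> phi \<cdot> (P \<cdot> psi \<cdot> Q) = phi"
  proof -
    have "phi \<cdot> phi \<cdot> (P \<cdot> psi \<cdot> Q) = phi \<cdot> (phi \<cdot> P) \<cdot> (psi \<cdot> Q)"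
      using phi psi P Q by (simp add: laws)
    also have "\<dots> = phi \<cdot> (phi \<cdot> (psi \<cdot> Q))" using phi psi Q by (simp add: laws phi_P)
    finally show ?thesis by (simp add: Q_absorbs phi_Q)
  qed
  ultimately show ?thesis
    unfolding is_dcore_inv_def chi_phi using psi P Q by (simp add: laws(2) P_adj)
qed

end

section \<open>Kernels, cokernels and inner inverses\<close>

lemma kernel_factor:
  assumes "is_kernel C X Y phi K kappa" "M \<in> Ob C" "a \<in> Hom C M X" "a \<cdot> phi = zr C M Y"
  obtains a' where "a' \<in> Hom C M K" "a = a' \<cdot> kappa"
  using assms unfolding is_kernel_def by blast

lemma kernel_cancel:
  assumes ker: "is_kernel C X Y phi K kappa" and X: "X \<in> Ob C" and Y: "Y \<in> Ob C"
    and phi: "phi \<in> Hom C X Y"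
    and M: "M \<in> Ob C" and a: "a \<in> Hom C M K" and b: "b \<in> Hom C M K" and eq: "a \<cdot> kappa = b \<cdot> kappa"
  shows "a = b"
proof -
  have K: "K \<in> Ob C" and kappa: "kappa \<in> Hom C K X" and kappa_phi: "kappa \<cdot> phi = zr C K Y"
    using ker unfolding is_kernel_def by auto
  have "a \<cdot> kappa \<cdot> phi = a \<cdot> (kappa \<cdot> phi)" using M K X Y a kappa phi by (simp add: comp_assoc)
  then have "a \<cdot> kappa \<cdot> phi = zr C M Y" using M K Y a by (simp add: kappa_phi comp_zero_right)
  moreover have "a \<cdot> kappa \<in> Hom C M X" using M K X a kappa by (rule comp_closed)
  ultimately have "\<exists>!a'. a' \<in> Hom C M K \<and> a \<cdot> kappa = a' \<cdot> kappa"
    using ker M unfolding is_kernel_def by blast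
  with a b eq show ?thesis by blast
qed

lemma cokernel_factor:
  assumes "is_cokernel C X Y phi L lam" "M \<in> Ob C" "b \<in> Hom C Y M" "phi \<cdot> b = zr C X M"
  obtains b' where "b' \<in> Hom C L M" "b = lam \<cdot> b'"
  using assms unfolding is_cokernel_def by blast

lemma cokernel_cancel:
  assumes cok: "is_cokernel C X Y phi L lam" and X: "X \<in> Ob C" and Y: "Y \<in> Ob C"
    and phi: "phi \<in> Hom C X Y"
    and M: "M \<in> Ob C" and a: "a \<in> Hom C L M" and b: "b \<in> Hom C L M" and eq: "lam \<cdot> a = lam \<cdot> b"
  shows "a = b"
proof -
  have L: "L \<in> Ob C" and lam: "lam \<in> Hom C Y L" and phi_lam: "phi \<cdot> lam = zr C X L"
    using cok unfolding is_cokernel_def by auto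
  have "phi \<cdot> (lam \<cdot> a) = phi \<cdot> lam \<cdot> a" using X Y L M phi lam a by (simp add: comp_assoc)
  then have "phi \<cdot> (lam \<cdot> a) = zr C X M" using X L M a by (simp add: phi_lam comp_zero_left)
  moreover have "lam \<cdot> a \<in> Hom C Y M" using Y L M lam a by (rule comp_closed)
  ultimately have "\<exists>!b'. b' \<in> Hom C L M \<and> lam \<cdot> a = lam \<cdot> b'"
    using cok M unfolding is_cokernel_def by blast
  with a b eq show ?thesis by blast
qed

lemma kernel_absorbs_inner_inverse:
  assumes ker: "is_kernel C X Y phi K kappa" and X: "X \<in> Ob C" and Y: "Y \<in> Ob C" and Z: "Z \<in> Ob C"
    and phi: "phi \<in> Hom C X Y" and psi: "psi \<in> Hom C Y X" and inner: "phi \<cdot> psi \<cdot> phi = phi"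
    and Q: "Q \<in> Hom C X Z" and kappa_Q: "kappa \<cdot> Q = zr C K Z"
  shows "phi \<cdot> (psi \<cdot> Q) = Q"
proof -
  have K: "K \<in> Ob C" and kappa: "kappa \<in> Hom C K X"
    using ker unfolding is_kernel_def by auto
  have phi_psi: "phi \<cdot> psi \<in> Hom C X X" using X Y phi psi by (simp add: comp_closed)
  define D where "D = mns C (idm C X) (phi \<cdot> psi)"
  have D: "D \<in> Hom C X X" unfolding D_def using X phi_psi by (simp add: diff_closed id_closed)
  have "D \<cdot> phi = mns C phi (phi \<cdot> psi \<cdot> phi)"
    unfolding D_def using X Y phi phi_psi by (simp add: comp_diff_distrib_right id_closed comp_id_left)
  also have "\<dots> = zr C X Y" using X Y phi by (simp add: inner diff_self)
  finally obtain s where s: "s \<in> Hom C X K" and D_eq: "D = s \<cdot> kappa"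
    using kernel_factor[OF ker X D] by blast
  have "mns C Q (phi \<cdot> psi \<cdot> Q) = D \<cdot> Q"
    unfolding D_def using X Z Q phi_psi by (simp add: comp_diff_distrib_right id_closed comp_id_left)
  also have "\<dots> = s \<cdot> (kappa \<cdot> Q)" using X K Z s kappa Q by (simp add: D_eq comp_assoc)
  also have "\<dots> = zr C X Z" using X K Z s by (simp add: kappa_Q comp_zero_right)
  finally have "phi \<cdot> psi \<cdot> Q = Q"
    using diff_eq_zero_imp_eq[OF X Z Q] comp_closed[OF X X Z phi_psi Q] by blast
  then show ?thesis using X Y Z phi psi Q by (simp add: comp_assoc)
qed

lemma cokernel_absorbs_inner_inverse:
  assumes cok: "is_cokernel C X Y phi L lam" and X: "X \<in> Ob C" and Y: "Y \<in> Ob C" and Z: "Z \<in> Ob C"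
    and phi: "phi \<in> Hom C X Y" and psi: "psi \<in> Hom C Y X" and inner: "phi \<cdot> psi \<cdot> phi = phi"
    and P: "P \<in> Hom C Z Y" and P_lam: "P \<cdot> lam = zr C Z L"
  shows "P \<cdot> (psi \<cdot> phi) = P"
proof -
  have L: "L \<in> Ob C" and lam: "lam \<in> Hom C Y L"
    using cok unfolding is_cokernel_def by auto
  have psi_phi: "psi \<cdot> phi \<in> Hom C Y Y" using X Y phi psi by (simp add: comp_closed)
  define D where "D = mns C (idm C Y) (psi \<cdot> phi)"
  have D: "D \<in> Hom C Y Y" unfolding D_def using Y psi_phi by (simp add: diff_closed id_closed)
  have "phi \<cdot> D = mns C phi (phi \<cdot> psi \<cdot> phi)"
    unfolding D_def using X Y phi psi psi_phi
    by (simp add: comp_diff_distrib_left id_closed comp_id_right comp_assoc)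
  also have "\<dots> = zr C X Y" using X Y phi by (simp add: inner diff_self)
  finally obtain r where r: "r \<in> Hom C L Y" and D_eq: "D = lam \<cdot> r"
    using cokernel_factor[OF cok Y D] by blast
  have "mns C P (P \<cdot> (psi \<cdot> phi)) = P \<cdot> D"
    unfolding D_def using Y Z P psi_phi by (simp add: comp_diff_distrib_left id_closed comp_id_right)
  also have "\<dots> = P \<cdot> lam \<cdot> r" using Y L Z P lam r by (simp add: D_eq comp_assoc)
  also have "\<dots> = zr C Z Y" using Y L Z r by (simp add: P_lam comp_zero_left)
  finally show ?thesis
    using diff_eq_zero_imp_eq[OF Z Y P] comp_closed[OF Z Y Y P psi_phi] by blast
qed

end

section \<open>Endomorphisms with a kernel and a cokernel\<close>

locale kernel_cokernel_setting = additive_inv_category +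
  fixes X phi K kappa L lam
  assumes X: "X \<in> Ob C" and phi: "phi \<in> Hom C X X"
    and kernel: "is_kernel C X X phi K kappa" and cokernel: "is_cokernel C X X phi L lam"
begin

lemma K: "K \<in> Ob C" and kappa: "kappa \<in> Hom C K X" and kappa_phi: "kappa \<cdot> phi = zr C K X"
  using kernel unfolding is_kernel_def by auto

lemma L: "L \<in> Ob C" and lam: "lam \<in> Hom C X L" and phi_lam: "phi \<cdot> lam = zr C X L"
  using cokernel unfolding is_cokernel_def by auto

lemma phi_lam_comp: "\<lbrakk>Y \<in> Ob C; f \<in> Hom C L Y\<rbrakk> \<Longrightarrow> phi \<cdot> (lam \<cdot> f) = zr C X Y"
  using X L phi lam by (simp add: comp_assoc[symmetric] phi_lam comp_zero_left)

lemma kappa_phi_comp: "\<lbrakk>Y \<in> Ob C; f \<in> Hom C X Y\<rbrakk> \<Longrightarrow> kappa \<cdot> (phi \<cdot> f) = zr C K Y"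
  using X K phi kappa by (simp add: comp_assoc[symmetric] kappa_phi comp_zero_left)

(* The simplifier cannot guess the intermediate objects in the premises of the typed laws, so
   each law (its object variables come first) is instantiated at all combinations of X, K, L. *)

lemmas typed_laws_3 = comp_closed comp_zero_left comp_zero_right comp_diff_distrib_left
  comp_diff_distrib_right star_comp comp_assoc[of X] comp_assoc[of K] comp_assoc[of L]
lemmas typed_laws_2 = comp_id_left comp_id_right zero_closed diff_closed diff_self diff_zero
  star_closed star_star star_diff star_zero typed_laws_3[of X] typed_laws_3[of K] typed_laws_3[of L]
lemmas typed_laws_1 = id_closed star_id phi_lam_comp kappa_phi_comp
  typed_laws_2[of X] typed_laws_2[of K] typed_laws_2[of L]
lemmas typed_simps = typed_laws_1[of X] typed_laws_1[of K] typed_laws_1[of L]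
  X K L phi kappa lam phi_lam kappa_phi

lemma kappa_lam_invertibleI:
  assumes E: "E \<in> Hom C X X" and phi_E: "phi \<cdot> E = zr C X X" and E_phi: "E \<cdot> phi = zr C X X"
    and kappa_E: "kappa \<cdot> E = kappa" and E_lam: "E \<cdot> lam = lam"
  shows "invertible C K L (kappa \<cdot> lam)"
proof -
  obtain sigma where sigma: "sigma \<in> Hom C X K" and E_sigma: "E = sigma \<cdot> kappa"
    using kernel_factor[OF kernel X E E_phi] .
  obtain tau where tau: "tau \<in> Hom C L X" and E_tau: "E = lam \<cdot> tau"
    using cokernel_factor[OF cokernel X E phi_E] .
  have kappa_sigma: "kappa \<cdot> sigma = idm C K"
  proof (rule kernel_cancel[OF kernel X X phi K])
    have "kappa \<cdot> sigma \<cdot> kappa = kappa \<cdot> E" using sigma by (simp add: E_sigma typed_simps)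
    then show "kappa \<cdot> sigma \<cdot> kappa = idm C K \<cdot> kappa" by (simp add: kappa_E typed_simps)
  qed (use sigma in \<open>simp_all add: typed_simps\<close>)
  have "is_inverse C K L (kappa \<cdot> lam) (tau \<cdot> sigma)"
    unfolding is_inverse_def
  proof (intro conjI)
    show "tau \<cdot> sigma \<in> Hom C L K" using sigma tau by (simp add: typed_simps)
    have "kappa \<cdot> lam \<cdot> (tau \<cdot> sigma) = kappa \<cdot> E \<cdot> sigma"
      using sigma tau by (simp add: E_tau typed_simps)
    then show "kappa \<cdot> lam \<cdot> (tau \<cdot> sigma) = idm C K" by (simp add: kappa_E kappa_sigma)
    show "tau \<cdot> sigma \<cdot> (kappa \<cdot> lam) = idm C L"
    proof (rule cokernel_cancel[OF cokernel X X phi L])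
      have "lam \<cdot> (tau \<cdot> sigma \<cdot> (kappa \<cdot> lam)) = lam \<cdot> tau \<cdot> (sigma \<cdot> kappa \<cdot> lam)"
        using sigma tau by (simp add: typed_simps)
      also have "\<dots> = E \<cdot> (E \<cdot> lam)" by (simp only: flip: E_tau E_sigma)
      finally show "lam \<cdot> (tau \<cdot> sigma \<cdot> (kappa \<cdot> lam)) = lam \<cdot> idm C L"
        by (simp add: E_lam typed_simps)
    qed (use sigma tau in \<open>simp_all add: typed_simps\<close>)
  qed
  then show ?thesis unfolding invertible_def ..
qed

lemma gram_invertibleI:
  assumes Q: "Q \<in> Hom C X X" and Q_adj: "star C Q = Q" and phi_Q: "phi \<cdot> Q = zr C X X"
    and Q_lam: "Q \<cdot> lam = lam"
  shows "invertible C L L (star C lam \<cdot> lam)"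
proof -
  obtain rho where rho: "rho \<in> Hom C L X" and Q_rho: "Q = lam \<cdot> rho"
    using cokernel_factor[OF cokernel X Q phi_Q] .
  have rho_lam: "rho \<cdot> lam = idm C L"
  proof (rule cokernel_cancel[OF cokernel X X phi L])
    have "lam \<cdot> (rho \<cdot> lam) = Q \<cdot> lam" using rho by (simp add: Q_rho typed_simps)
    then show "lam \<cdot> (rho \<cdot> lam) = lam \<cdot> idm C L" by (simp add: Q_lam typed_simps)
  qed (use rho in \<open>simp_all add: typed_simps\<close>)
  have rho_adj: "star C rho \<cdot> star C lam = lam \<cdot> rho"
    using star_comp[OF X L X lam rho] Q_adj by (simp add: Q_rho)
  have lam_adj: "star C lam \<cdot> star C rho = idm C L"
    using star_comp[OF L X L rho lam] by (simp add: rho_lam typed_simps)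
  have "is_inverse C L L (star C lam \<cdot> lam) (rho \<cdot> star C rho)"
    unfolding is_inverse_def
  proof (intro conjI)
    show "rho \<cdot> star C rho \<in> Hom C L L" using rho by (simp add: typed_simps)
    have "star C lam \<cdot> lam \<cdot> (rho \<cdot> star C rho) = star C lam \<cdot> (lam \<cdot> rho) \<cdot> star C rho"
      using rho by (simp add: typed_simps)
    also have "\<dots> = star C lam \<cdot> star C rho \<cdot> (star C lam \<cdot> star C rho)"
      using rho by (simp add: typed_simps flip: rho_adj)
    finally show "star C lam \<cdot> lam \<cdot> (rho \<cdot> star C rho) = idm C L"
      by (simp add: lam_adj typed_simps)
    have "rho \<cdot> star C rho \<cdot> (star C lam \<cdot> lam) = rho \<cdot> (star C rho \<cdot> star C lam) \<cdot> lam"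
      using rho by (simp add: typed_simps)
    also have "\<dots> = rho \<cdot> lam \<cdot> (rho \<cdot> lam)"
      using rho by (simp add: rho_adj typed_simps)
    finally show "rho \<cdot> star C rho \<cdot> (star C lam \<cdot> lam) = idm C L"
      by (simp add: rho_lam typed_simps)
  qed
  then show ?thesis unfolding invertible_def ..
qed

lemma dcore_inv_imp_invertible:
  assumes dc: "is_dcore_inv C X phi chi"
  shows "invertible C K L (kappa \<cdot> lam)" and "invertible C L L (star C lam \<cdot> lam)"
proof -
  note chi = is_dcore_invD[OF X phi dc] dcore_inv_inner[OF X phi dc]
  have phi_chi_lam: "phi \<cdot> (chi \<cdot> lam) = zr C X L"
  proof -
    have "phi \<cdot> (chi \<cdot> lam) = phi \<cdot> (chi \<cdot> (chi \<cdot> phi) \<cdot> lam)" by (simp only: chi(3))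
    also have "\<dots> = zr C X L" using chi(1) by (simp add: typed_simps)
    finally show ?thesis .
  qed
  show "invertible C K L (kappa \<cdot> lam)"
    by (rule kappa_lam_invertibleI[of "mns C (idm C X) (phi \<cdot> chi)"])
      (use chi phi_chi_lam in \<open>simp_all add: typed_simps\<close>)
  show "invertible C L L (star C lam \<cdot> lam)"
    by (rule gram_invertibleI[of "mns C (idm C X) (chi \<cdot> phi)"])
      (use chi in \<open>simp_all add: typed_simps\<close>)
qed

lemma cokernel_complement:
  assumes v: "is_inverse C L L (star C lam \<cdot> lam) v"
  defines "P \<equiv> mns C (idm C X) (lam \<cdot> v \<cdot> star C lam)"
  shows "P \<in> Hom C X X" and "star C P = P" and "P \<cdot> lam = zr C X L" and "phi \<cdot> P = phi"
proof -
  have v_H: "v \<in> Hom C L L" and v_left: "v \<cdot> (star C lam \<cdot> lam) = idm C L"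
    using v unfolding is_inverse_def by auto
  have v_adj: "star C v = v"
    using inverse_self_adjoint[OF L _ _ v] by (simp add: typed_simps)
  show "P \<in> Hom C X X" and "star C P = P" and "phi \<cdot> P = phi"
    unfolding P_def using v_H by (simp_all add: v_adj typed_simps)
  have "P \<cdot> lam = mns C lam (lam \<cdot> (v \<cdot> (star C lam \<cdot> lam)))"
    unfolding P_def using v_H by (simp add: typed_simps)
  then show "P \<cdot> lam = zr C X L" by (simp add: v_left typed_simps)
qed

lemma kernel_complement:
  assumes u: "is_inverse C K L (kappa \<cdot> lam) u"
  defines "Q \<equiv> mns C (idm C X) (lam \<cdot> u \<cdot> kappa)"
  shows "Q \<in> Hom C X X" and "kappa \<cdot> Q = zr C K X" and "Q \<cdot> lam = zr C X L"
    and "phi \<cdot> Q = phi" and "Q \<cdot> phi = phi"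
proof -
  have u_H: "u \<in> Hom C L K" and u_right: "kappa \<cdot> lam \<cdot> u = idm C K"
    and u_left: "u \<cdot> (kappa \<cdot> lam) = idm C L"
    using u unfolding is_inverse_def by auto
  show "Q \<in> Hom C X X" and "phi \<cdot> Q = phi" and "Q \<cdot> phi = phi"
    unfolding Q_def using u_H by (simp_all add: typed_simps)
  have "kappa \<cdot> Q = mns C kappa (kappa \<cdot> lam \<cdot> u \<cdot> kappa)"
    unfolding Q_def using u_H by (simp add: typed_simps)
  then show "kappa \<cdot> Q = zr C K X" by (simp add: u_right typed_simps)
  have "Q \<cdot> lam = mns C lam (lam \<cdot> (u \<cdot> (kappa \<cdot> lam)))"
    unfolding Q_def using u_H by (simp add: typed_simps)
  then show "Q \<cdot> lam = zr C X L" by (simp add: u_left typed_simps)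
qed

lemma dcore_inv_formula:
  assumes psi: "psi \<in> Hom C X X" and inner: "phi \<cdot> psi \<cdot> phi = phi"
    and "invertible C K L (kappa \<cdot> lam)" and "invertible C L L (star C lam \<cdot> lam)"
  shows "is_dcore_inv C X phi
    (mns C (idm C X) (lam \<cdot> minv C L L (star C lam \<cdot> lam) \<cdot> star C lam) \<cdot> psi
      \<cdot> mns C (idm C X) (lam \<cdot> minv C K L (kappa \<cdot> lam) \<cdot> kappa))"
proof -
  obtain u where u: "is_inverse C K L (kappa \<cdot> lam) u"
    using assms(3) unfolding invertible_def ..
  obtain v where v: "is_inverse C L L (star C lam \<cdot> lam) v"
    using assms(4) unfolding invertible_def ..
  have "minv C K L (kappa \<cdot> lam) = u" and "minv C L L (star C lam \<cdot> lam) = v"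
    using minv_eqI[OF K L _ u] minv_eqI[OF L L _ v] by (simp_all add: typed_simps)
  moreover define P Q
    where "P = mns C (idm C X) (lam \<cdot> v \<cdot> star C lam)" and "Q = mns C (idm C X) (lam \<cdot> u \<cdot> kappa)"
  note P = cokernel_complement[OF v, folded P_def] and Q = kernel_complement[OF u, folded Q_def]
  have QP: "Q \<cdot> P = Q"
  proof -
    have v_H: "v \<in> Hom C L L" using v unfolding is_inverse_def by blast
    have "Q \<cdot> P = mns C Q (Q \<cdot> lam \<cdot> (v \<cdot> star C lam))"
      unfolding P_def using Q(1) v_H by (simp add: typed_simps)
    then show ?thesis using Q(1) v_H by (simp add: Q(3) typed_simps)
  qed
  have "is_dcore_inv C X phi (P \<cdot> psi \<cdot> Q)"
  proof (rule dcore_inv_of_projections[OF X phi psi P(1) Q(1) P(2) QP P(4) Q(4) Q(5)])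
    show "P \<cdot> (psi \<cdot> phi) = P"
      by (rule cokernel_absorbs_inner_inverse[OF cokernel X X X phi psi inner P(1,3)])
    show "phi \<cdot> (psi \<cdot> Q) = Q"
      by (rule kernel_absorbs_inner_inverse[OF kernel X X X phi psi inner Q(1,2)])
  qed
  ultimately show ?thesis by (simp add: P_def Q_def)
qed

end

theorem theorem3p4:
  fixes C :: "('o, 'm) icat"
  assumes "additive_inv_cat C"
    and "X \<in> Ob C" and "phi \<in> Hom C X X"
    and "is_kernel C X X phi K kappa"
    and "is_cokernel C X X phi L lam"
  shows "(has_dcore_inv C X phi \<longleftrightarrow>
            regular C X X phi \<and>
            invertible C K L (cmp C kappa lam) \<and>
            invertible C L L (cmp C (star C lam) lam)) \<and>
         (has_dcore_inv C X phi \<longrightarrow>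
            (\<forall>psi\<in>Hom C X X. cmp C (cmp C phi psi) phi = phi \<longrightarrow>
               dcore C X phi =
                 cmp C (cmp C
                   (mns C (idm C X)
                      (cmp C (cmp C lam (minv C L L (cmp C (star C lam) lam))) (star C lam)))
                   psi)
                   (mns C (idm C X)
                      (cmp C (cmp C lam (minv C K L (cmp C kappa lam))) kappa))))"
proof -
  interpret kernel_cokernel_setting C X phi K kappa L lam
    by unfold_locales (use assms in auto)
  have forward: "has_dcore_inv C X phi \<Longrightarrow>
      regular C X X phi \<and> invertible C K L (kappa \<cdot> lam) \<and> invertible C L L (star C lam \<cdot> lam)"
    unfolding has_dcore_inv_def using dcore_inv_imp_regular[OF X phi] dcore_inv_imp_invertible by blast
  show ?thesis
    using forward dcore_inv_formula dcore_eqI[OF X phi] unfolding has_dcore_inv_def regular_def by blast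
qed

end
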